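(* Let $X$ and $Y$ be Hilbert spaces, let $A:X\to Y$ be a bounded linear operator with adjoint $A^\ast$, let $x^\dagger\in X$, put $y:=Ax^\dagger$, and define $f:X\to\mathbb{R}$ by $f(x):=\|Ax-y\|^2$, so that $\nabla f(x)=2A^\ast(Ax-y)$. Let $\mu>0$ and let $x\in X$ satisfy $x-x^\dagger=(A^\ast A)^\mu w$ for some $w\in X$. Then $$\|Ax-y\|^{\frac{2\mu+2}{2\mu+1}}\;\le\;\|w\|^{\frac{1}{2\mu+1}}\,\|A^\ast(Ax-y)\|.$$ Equivalently, the source condition implies a Kurdyka–Łojasiewicz inequality of the form $\varphi'\big(f(x)-f(x^\dagger)\big)\,\|\nabla f(x)\|\ge \frac{1}{k}$ (whenever $f(x)>0$) with desingularizing function $\varphi(t)=c\,t^{\frac{\mu}{2\mu+1}}$, where the constants $c,k>0$ depend only on $\mu$ and $\|w\|$.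
   Context: $(A^\ast A)^\mu$ denotes the fractional power of the self-adjoint nonnegative operator $A^\ast A$ defined via spectral calculus. Note $f(x^\dagger)=0$, so $x^\dagger$ minimizes $f$. A smooth index (desingularizing) function is $\varphi\in C[0,\bar r)\cap C^1(0,\bar r)$ with $\varphi(0)=0$ and $\varphi'>0$ on $(0,\bar r)$. *)

theory Defs
  imports "HOL-Analysis.Analysis" "HOL-Computational_Algebra.Polynomial"
begin

definition poly_op :: "real poly \<Rightarrow> ('a::real_vector \<Rightarrow> 'a) \<Rightarrow> 'a \<Rightarrow> 'a" where
  "poly_op p T x = (\<Sum>i\<le>degree p. coeff p i *\<^sub>R (T ^^ i) x)"

text \<open>Fractional power T^mu of a nonnegative self-adjoint bounded operator T via the
  (continuous) spectral calculus: for any sequence of real polynomials p_n converging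
  uniformly to t powr mu on [0, norm T] (which contains the spectrum of T),
  T^mu x is the limit of p_n(T) x.\<close>
definition frac_power :: "('a::real_inner \<Rightarrow> 'a) \<Rightarrow> real \<Rightarrow> 'a \<Rightarrow> 'a" where
  "frac_power T \<mu> x =
     (THE v. \<forall>p :: nat \<Rightarrow> real poly.
        uniform_limit {0..onorm T} (\<lambda>n t. poly (p n) t) (\<lambda>t. t powr \<mu>) sequentially
        \<longrightarrow> (\<lambda>n. poly_op (p n) T x) \<longlonglongrightarrow> v)"

end

(*
  Write T = A* A and u = x - xd = T^mu w. Then A x - y = A u, |A u|^2 = <T u, u> and
  A* (A x - y) = T u. For every K > 0, Young's inequality gives, for t >= 0 and
  theta = (2 mu + 1)/(2 mu + 2),
    t^(2 mu + 1) <= theta K t^(2 mu + 2) + (1 - theta) K^(-(2 mu + 1)).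
  Applied in the functional calculus of T to the vector w, this becomes
    <T u, u> <= theta K |T u|^2 + (1 - theta) K^(-(2 mu + 1)) |w|^2,
  and choosing K optimally gives the claimed inequality.

  The functional calculus is only given through uniform polynomial approximation, so the
  positivity step rests on Lukacs' theorem: a polynomial positive on [0, M] is a sum of terms
  s^2, s^2 t, s^2 (M - t) and s^2 t (M - t), each of which is a positive operator when
  0 <= T <= M. The adjoint of A exists by the Riesz representation theorem, which is
  derived from the parallelogram law.
*)
theory Submission
  imports Defs "HOL-Computational_Algebra.Fundamental_Theorem_Algebra"
begin

section \<open>Riesz representation and adjoints on Hilbert spaces\<close>

lemma near_minimizers_Cauchy:
  fixes \<phi> :: "'a::real_inner \<Rightarrow> real"
  assumes "linear \<phi>"
    and m_le: "\<And>z. m \<le> norm z ^ 2 - 2 * \<phi> z"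
    and z: "\<And>n. norm (z n) ^ 2 - 2 * \<phi> (z n) < m + 1 / Suc n"
  shows "Cauchy z"
proof (rule metric_CauchyI)
  define J where "J z = norm z ^ 2 - 2 * \<phi> z" for z
  \<comment> \<open>The parallelogram law turns near-minimality into the Cauchy property.\<close>
  have parallelogram: "norm (a - b) ^ 2 \<le> 2 * (J a + J b - 2 * m)" for a b
  proof -
    have "m \<le> J ((1/2) *\<^sub>R (a + b))" unfolding J_def by (rule m_le)
    moreover have "J ((1/2) *\<^sub>R (a + b)) = (1/4) * norm (a + b) ^ 2 - \<phi> a - \<phi> b"
      unfolding J_def linear_scale[OF assms(1)] linear_add[OF assms(1)] norm_scaleR
      by (simp add: power_mult_distrib field_simps)
    moreover have "norm (a - b) ^ 2 + norm (a + b) ^ 2 = 2 * norm a ^ 2 + 2 * norm b ^ 2"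
      by (simp add: power2_norm_eq_inner inner_diff inner_add inner_commute)
    ultimately show ?thesis unfolding J_def by argo
  qed
  fix e :: real assume e: "e > 0"
  obtain N :: nat where N: "4 / e^2 < N" using reals_Archimedean2 by blast
  have "dist (z p) (z n) < e" if "N \<le> p" "N \<le> n" for p n
  proof -
    have "norm (z p - z n) ^ 2 < 2 * (1 / Suc p + 1 / Suc n)"
      using parallelogram[of "z p" "z n"] z[of p] z[of n] unfolding J_def by argo
    also have "\<dots> \<le> 2 * (1 / Suc N + 1 / Suc N)"
      using that by (intro mult_left_mono add_mono divide_left_mono) auto
    also have "\<dots> < e^2"
      using N e by (simp add: field_simps) (use zero_less_power[OF e, of 2] in linarith)
    finally show ?thesis using e by (simp add: dist_norm power_less_imp_less_base)
  qed
  then show "\<exists>N. \<forall>p\<ge>N. \<forall>n\<ge>N. dist (z p) (z n) < e" by blast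
qed

lemma quadratic_functional_has_min:
  fixes \<phi> :: "'a::{real_inner,complete_space} \<Rightarrow> real"
  assumes "bounded_linear \<phi>"
  shows "\<exists>z0. \<forall>z. norm z0 ^ 2 - 2 * \<phi> z0 \<le> norm z ^ 2 - 2 * \<phi> z"
proof -
  interpret bounded_linear \<phi> by fact
  obtain K where K: "\<And>x. norm (\<phi> x) \<le> norm x * K" using bounded by blast
  define J where "J z = norm z ^ 2 - 2 * \<phi> z" for z
  have "J z \<ge> - (K^2)" for z
  proof -
    have "\<phi> z \<le> norm z * K" using K[of z] by simp
    moreover have "0 \<le> (norm z - K)^2" by simp
    ultimately show ?thesis unfolding J_def power2_eq_square by (simp add: algebra_simps)
  qed
  then have bdd: "bdd_below (range J)" by (intro bdd_belowI2)
  define m where "m = Inf (range J)"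
  have m_le: "m \<le> J z" for z unfolding m_def using bdd by (simp add: cInf_lower)
  have "\<exists>z. J z < m + 1 / Suc n" for n
  proof -
    have "Inf (range J) < m + 1 / Suc n" unfolding m_def by simp
    then show ?thesis using bdd by (subst (asm) cInf_less_iff) auto
  qed
  then obtain z where z: "\<And>n. J (z n) < m + 1 / Suc n" by metis
  have "Cauchy z" using m_le z unfolding J_def by (intro near_minimizers_Cauchy[OF linear])
  then obtain z0 where lim: "z \<longlonglongrightarrow> z0" using Cauchy_convergent_iff convergent_def by blast
  have "J z0 \<le> m"
  proof (rule LIMSEQ_le)
    show "(\<lambda>n. J (z n)) \<longlonglongrightarrow> J z0"
      unfolding J_def by (intro tendsto_intros lim tendsto)
    show "(\<lambda>n. m + 1 / Suc n) \<longlonglongrightarrow> m"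
      using tendsto_add[OF tendsto_const LIMSEQ_Suc[OF lim_inverse_n']] by (simp add: divide_inverse)
    show "\<exists>N. \<forall>n\<ge>N. J (z n) \<le> m + 1 / Suc n" using z less_imp_le by blast
  qed
  then show ?thesis unfolding J_def using m_le J_def by (metis order_trans)
qed

lemma minimizer_represents:
  fixes \<phi> :: "'a::real_inner \<Rightarrow> real"
  assumes "linear \<phi>" and min: "\<And>z. norm z0 ^ 2 - 2 * \<phi> z0 \<le> norm z ^ 2 - 2 * \<phi> z"
  shows "\<phi> h = z0 \<bullet> h"
proof -
  define c where "c = z0 \<bullet> h - \<phi> h"
  define d where "d = norm h ^ 2"
  have "d \<ge> 0" unfolding d_def by simp
  define s where "s = 1 / (d + 1)"
  have s: "s > 0" "s * d < 1" unfolding s_def using \<open>d \<ge> 0\<close> by (simp_all add: field_simps)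
  have "norm (z0 + t *\<^sub>R h) ^ 2 - 2 * \<phi> (z0 + t *\<^sub>R h)
        = norm z0 ^ 2 - 2 * \<phi> z0 + 2 * t * c + t^2 * d" for t
    unfolding c_def d_def power2_norm_eq_inner using assms(1)
    by (simp add: linear_add linear_scale inner_add inner_commute algebra_simps power2_eq_square)
  from min[of "z0 + (- c * s) *\<^sub>R h"] this[of "- c * s"]
  have "0 \<le> (c^2 * s) * (s * d - 2)" by (simp add: algebra_simps power2_eq_square)
  with s have "c^2 * s \<le> 0" by (simp add: zero_le_mult_iff)
  with s have "c^2 \<le> 0" by (simp add: mult_le_0_iff)
  then show ?thesis unfolding c_def by simp
qed

lemma riesz_representation:
  fixes \<phi> :: "'a::{real_inner,complete_space} \<Rightarrow> real"
  assumes "bounded_linear \<phi>"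
  shows "\<exists>z. \<forall>h. \<phi> h = z \<bullet> h"
  using quadratic_functional_has_min[OF assms]
    minimizer_represents[OF bounded_linear.linear[OF assms]] by metis

lemma adjoint_works_hilbert:
  fixes A :: "'a::{real_inner,complete_space} \<Rightarrow> 'b::real_inner"
  assumes "bounded_linear A"
  shows "A x \<bullet> y = x \<bullet> adjoint A y"
proof -
  have "\<exists>z. \<forall>x. A x \<bullet> y = z \<bullet> x" for y
    by (rule riesz_representation)
      (rule bounded_linear_compose[OF bounded_linear_inner_left assms])
  then have "\<exists>A'. \<forall>x y. A x \<bullet> y = x \<bullet> A' y" by (metis inner_commute)
  then have "\<forall>x y. A x \<bullet> y = x \<bullet> adjoint A y" unfolding adjoint_def by (rule someI_ex)
  then show ?thesis by blast
qed

lemma bounded_linear_adjoint_hilbert: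
  fixes A :: "'a::{real_inner,complete_space} \<Rightarrow> 'b::real_inner"
  assumes "bounded_linear A"
  shows "bounded_linear (adjoint A)"
proof
  note adj = adjoint_works_hilbert[OF assms]
  show "adjoint A (y + z) = adjoint A y + adjoint A z" for y z
    by (rule vector_eq_ldot[THEN iffD1]) (metis adj inner_add_right)
  show "adjoint A (r *\<^sub>R y) = r *\<^sub>R adjoint A y" for r y
    by (rule vector_eq_ldot[THEN iffD1]) (metis adj inner_scaleR_right)
  obtain K where K: "K > 0" "\<And>x. norm (A x) \<le> norm x * K"
    using bounded_linear.pos_bounded[OF assms] by blast
  have "norm (adjoint A y) \<le> norm y * K" for y
  proof -
    have "norm (adjoint A y) ^ 2 = A (adjoint A y) \<bullet> y"
      by (simp add: power2_norm_eq_inner adj)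
    also have "\<dots> \<le> norm (adjoint A y) * K * norm y"
      using norm_cauchy_schwarz[of "A (adjoint A y)" y] K(2)[of "adjoint A y"]
      by (meson mult_right_mono norm_ge_zero order_trans)
    finally show ?thesis using K(1)
      by (cases "adjoint A y = 0") (auto simp: power2_eq_square mult_ac mult_le_cancel_left_pos)
  qed
  then show "\<exists>K. \<forall>y. norm (adjoint A y) \<le> norm y * K" by blast
qed

section \<open>Polynomials of a linear operator\<close>

lemma poly_op_0 [simp]: "poly_op 0 T x = 0"
  by (simp add: poly_op_def)

lemma poly_op_pCons:
  assumes "linear T"
  shows "poly_op (pCons a p) T x = a *\<^sub>R x + T (poly_op p T x)"
proof -
  have "poly_op (pCons a p) T x = (\<Sum>i\<le>Suc (degree p). coeff (pCons a p) i *\<^sub>R (T ^^ i) x)"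
    unfolding poly_op_def using degree_pCons_le[of a p]
    by (intro sum.mono_neutral_left) (auto intro: coeff_eq_0)
  also have "\<dots> = a *\<^sub>R x + (\<Sum>i\<le>degree p. coeff p i *\<^sub>R T ((T ^^ i) x))"
    by (subst sum.atMost_Suc_shift) simp
  also have "(\<Sum>i\<le>degree p. coeff p i *\<^sub>R T ((T ^^ i) x)) = T (poly_op p T x)"
    unfolding poly_op_def using assms by (simp add: linear_sum linear_scale)
  finally show ?thesis .
qed

context
  fixes T :: "'a::real_vector \<Rightarrow> 'a"
  assumes lin: "linear T"
begin

lemma poly_op_const [simp]: "poly_op [:c:] T x = c *\<^sub>R x"
  by (simp add: poly_op_pCons lin linear_0)

lemma poly_op_1 [simp]: "poly_op 1 T x = x"
  using poly_op_const[of 1] by (simp add: one_pCons)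

lemma poly_op_X [simp]: "poly_op [:0, 1:] T x = T x"
  by (simp add: poly_op_pCons lin linear_0)

lemma poly_op_add: "poly_op (p + q) T x = poly_op p T x + poly_op q T x"
  by (induction p q rule: poly_induct2) (simp_all add: poly_op_pCons lin linear_add algebra_simps)

lemma poly_op_smult: "poly_op (smult c p) T x = c *\<^sub>R poly_op p T x"
  by (induction p) (simp_all add: poly_op_pCons lin linear_add linear_scale scaleR_add_right)

lemma poly_op_diff: "poly_op (p - q) T x = poly_op p T x - poly_op q T x"
  using poly_op_add[of p "smult (-1) q"] poly_op_smult[of "-1" q] by simp

lemma poly_op_mult: "poly_op (p * q) T x = poly_op p T (poly_op q T x)"
  by (induction p) (simp_all add: poly_op_pCons lin poly_op_add poly_op_smult)

lemma poly_op_commute: "poly_op p T (T x) = T (poly_op p T x)"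
  by (metis mult.commute poly_op_X poly_op_mult)

end

section \<open>Polynomials positive on an interval\<close>

inductive interval_preordering :: "real \<Rightarrow> real poly \<Rightarrow> bool" for M where
  square_mult: "g \<in> {1, [:0, 1:], [:M, -1:], [:0, M, -1:]} \<Longrightarrow> interval_preordering M (s * s * g)"
| add: "interval_preordering M p \<Longrightarrow> interval_preordering M q \<Longrightarrow> interval_preordering M (p + q)"

lemma interval_preordering_mult_closed:
  assumes gens: "\<And>g. g \<in> {1, [:0, 1:], [:M, -1:], [:0, M, -1:]} \<Longrightarrow>
      \<exists>s g'. g' \<in> {1, [:0, 1:], [:M, -1:], [:0, M, -1:]} \<and> r * g = s * s * g'"
  shows "interval_preordering M p \<Longrightarrow> interval_preordering M (r * p)"
proof (induction rule: interval_preordering.induct)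
  case (square_mult g s)
  then obtain t g' where g': "g' \<in> {1, [:0, 1:], [:M, -1:], [:0, M, -1:]}" "r * g = t * t * g'"
    using gens by blast
  have "r * (s * s * g) = s * s * (r * g)" by (simp only: mult_ac)
  also have "\<dots> = s * s * (t * t * g')" by (simp only: g'(2))
  also have "\<dots> = (s * t) * (s * t) * g'" by (simp only: mult_ac)
  finally show ?case using g'(1) by (metis interval_preordering.square_mult)
next
  case (add p q)
  then show ?case by (simp add: distrib_left interval_preordering.add)
qed

lemma interval_preordering_square_mult:
  "interval_preordering M p \<Longrightarrow> interval_preordering M (s * s * p)"
  using interval_preordering_mult_closed[of M "s * s" p] by blast

lemma interval_preordering_X_mult:
  "interval_preordering M p \<Longrightarrow> interval_preordering M ([:0, 1:] * p)"
proof (rule interval_preordering_mult_closed)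
  fix g :: "real poly" assume "g \<in> {1, [:0, 1:], [:M, -1:], [:0, M, -1:]}"
  then show "\<exists>s g'. g' \<in> {1, [:0, 1:], [:M, -1:], [:0, M, -1:]} \<and> [:0, 1:] * g = s * s * g'"
    by (elim insertE emptyE) ((rule exI[of _ 1], force) | (rule exI[of _ "[:0, 1:]"], force))+
qed

lemma interval_preordering_M_minus_X_mult:
  "interval_preordering M p \<Longrightarrow> interval_preordering M ([:M, -1:] * p)"
proof (rule interval_preordering_mult_closed)
  fix g :: "real poly" assume "g \<in> {1, [:0, 1:], [:M, -1:], [:0, M, -1:]}"
  then show "\<exists>s g'. g' \<in> {1, [:0, 1:], [:M, -1:], [:0, M, -1:]} \<and> [:M, -1:] * g = s * s * g'"
    by (elim insertE emptyE) ((rule exI[of _ 1], force) | (rule exI[of _ "[:M, -1:]"], force))+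
qed

lemma interval_preordering_const: "c \<ge> 0 \<Longrightarrow> interval_preordering M [:c:]"
  using interval_preordering.square_mult[of 1 M "[:sqrt c:]"] by simp

lemma interval_preordering_shifted_X_mult:
  assumes "c \<ge> 0" "interval_preordering M p"
  shows "interval_preordering M ([:c, 1:] * p)"
proof -
  have "[:sqrt c:] * [:sqrt c:] = [:c:]" "[:c, 1:] = [:c:] + [:0, 1:]" using assms(1) by simp_all
  then have "[:c, 1:] * p = [:sqrt c:] * [:sqrt c:] * p + [:0, 1:] * p"
    by (simp only: distrib_right)
  then show ?thesis
    by (simp only:) (intro interval_preordering.add interval_preordering_square_mult
        interval_preordering_X_mult assms(2))
qed

lemma interval_preordering_shifted_M_minus_X_mult:
  assumes "c \<ge> M" "interval_preordering M p"
  shows "interval_preordering M ([:c, -1:] * p)"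
proof -
  have "[:sqrt (c - M):] * [:sqrt (c - M):] = [:c - M:]" "[:c, -1:] = [:c - M:] + [:M, -1:]"
    using assms(1) by simp_all
  then have "[:c, -1:] * p = [:sqrt (c - M):] * [:sqrt (c - M):] * p + [:M, -1:] * p"
    by (simp only: distrib_right)
  then show ?thesis
    by (simp only:) (intro interval_preordering.add interval_preordering_square_mult
        interval_preordering_M_minus_X_mult assms(2))
qed

lemma interval_preordering_sum_squares_mult:
  "interval_preordering M p \<Longrightarrow> interval_preordering M ((s * s + t * t) * p)"
  unfolding distrib_right by (intro interval_preordering.add interval_preordering_square_mult)

definition cpoly :: "real poly \<Rightarrow> complex \<Rightarrow> complex" where
  "cpoly p = poly (map_poly complex_of_real p)"

lemma cpoly_0 [simp]: "cpoly 0 z = 0"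
  by (simp add: cpoly_def)

lemma cpoly_pCons [simp]: "cpoly (pCons a p) z = of_real a + z * cpoly p z"
  by (simp add: cpoly_def map_poly_pCons)

lemma cpoly_add: "cpoly (p + q) z = cpoly p z + cpoly q z"
  by (induction p q rule: poly_induct2) (simp_all add: algebra_simps)

lemma cpoly_mult: "cpoly (p * q) z = cpoly p z * cpoly q z"
proof (induction p)
  case (pCons a p)
  have "cpoly (smult a q) z = of_real a * cpoly q z"
    by (induction q) (simp_all add: algebra_simps)
  with pCons show ?case by (simp add: cpoly_add algebra_simps)
qed simp

lemma cpoly_of_real: "cpoly p (of_real t) = of_real (poly p t)"
  by (induction p) simp_all

lemma cpoly_has_root: "degree p > 0 \<Longrightarrow> \<exists>z. cpoly p z = 0"
  unfolding cpoly_def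
  by (rule fundamental_theorem_of_algebra) (simp add: constant_degree degree_map_poly)

lemma real_quadratic_factor:
  assumes root: "cpoly p z = 0" and nonreal: "Im z \<noteq> 0"
  shows "\<exists>q. p = ([:- Re z, 1:] * [:- Re z, 1:] + [:Im z:] * [:Im z:]) * q"
proof -
  define f where "f = [:- Re z, 1:] * [:- Re z, 1:] + [:Im z:] * [:Im z:]"
  have "cpoly f z = (z - of_real (Re z))^2 + of_real (Im z)^2"
    unfolding f_def by (simp add: cpoly_add cpoly_mult algebra_simps power2_eq_square)
  also have "z - of_real (Re z) = \<i> * of_real (Im z)" by (simp add: complex_eq_iff)
  finally have "cpoly f z = 0" by (simp add: power_mult_distrib)
  have "degree f = 2" unfolding f_def using nonreal by (simp add: numeral_2_eq_2)
  then have "f \<noteq> 0" by auto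
  define r where "r = p mod f"
  have "degree r \<le> 1"
    using degree_mod_less[OF \<open>f \<noteq> 0\<close>, of p] \<open>degree f = 2\<close> unfolding r_def
    by (cases "p mod f = 0") auto
  then have r: "r = [:coeff r 0, coeff r 1:]"
    by (intro poly_eqI) (auto simp: coeff_pCons coeff_eq_0 split: nat.splits)
  have "cpoly r z = 0"
    using root \<open>cpoly f z = 0\<close> div_mult_mod_eq[of p f]
    unfolding r_def by (metis add_0 cpoly_add cpoly_mult mult_zero_right)
  then have "of_real (coeff r 0) + z * of_real (coeff r 1) = 0"
    by (subst (asm) r) simp
  then have "Im z * coeff r 1 = 0" "coeff r 0 + Re z * coeff r 1 = 0"
    by (simp_all add: complex_eq_iff)
  then have "r = 0" using nonreal by (subst r) simp
  then have "p = f * (p div f)" using div_mult_mod_eq[of p f] unfolding r_def by (simp add: mult.commute)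
  then show ?thesis unfolding f_def by blast
qed

lemma positive_factor_absorbed:
  assumes "degree p > 0" and pos: "\<forall>t\<in>{0..M}. poly p t > 0"
  obtains g q where "p = g * q" "degree g > 0" "\<forall>t\<in>{0..M}. poly g t > 0"
    "\<And>q. interval_preordering M q \<Longrightarrow> interval_preordering M (g * q)"
proof -
  obtain z where z: "cpoly p z = 0" using cpoly_has_root[OF assms(1)] by blast
  show ?thesis
  proof (cases "Im z = 0")
    case True
    then have "z = of_real (Re z)" by (simp add: complex_eq_iff)
    then have "poly p (Re z) = 0" using z cpoly_of_real[of p "Re z"] by simp
    then obtain q where pq: "p = [:- Re z, 1:] * q" by (auto simp: poly_eq_0_iff_dvd elim: dvdE)
    have "Re z \<notin> {0..M}" using pos \<open>poly p (Re z) = 0\<close> by fastforce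
    then consider "Re z < 0" | "Re z > M" by fastforce
    then show ?thesis
    proof cases
      case 1
      show ?thesis by (rule that[OF pq]) (use 1 interval_preordering_shifted_X_mult[of "- Re z"] in auto)
    next
      case 2
      have "p = [:Re z, -1:] * - q" unfolding pq by simp
      then show ?thesis
        by (rule that) (use 2 interval_preordering_shifted_M_minus_X_mult[of M "Re z"] in auto)
    qed
  next
    case False
    then obtain q where pq: "p = ([:- Re z, 1:] * [:- Re z, 1:] + [:Im z:] * [:Im z:]) * q"
      using real_quadratic_factor[OF z] by blast
    have "poly ([:- Re z, 1:] * [:- Re z, 1:] + [:Im z:] * [:Im z:]) t = (t - Re z)^2 + (Im z)^2" for t
      by (simp add: power2_eq_square algebra_simps)
    then have pos: "\<forall>t\<in>{0..M}. poly ([:- Re z, 1:] * [:- Re z, 1:] + [:Im z:] * [:Im z:]) t > 0"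
      using False by (simp add: add_nonneg_pos)
    have "degree ([:- Re z, 1:] * [:- Re z, 1:] + [:Im z:] * [:Im z:]) > 0"
      using False by (simp add: numeral_2_eq_2)
    from this pos show ?thesis
      by (rule that[OF pq _ _ interval_preordering_sum_squares_mult])
  qed
qed

lemma interval_preordering_if_positive:
  assumes "M \<ge> 0" and "\<forall>t\<in>{0..M}. poly p t > 0"
  shows "interval_preordering M p"
  using assms(2)
proof (induction "degree p" arbitrary: p rule: less_induct)
  case less
  show ?case
  proof (cases "degree p = 0")
    case True
    then obtain c where "p = [:c:]" by (metis degree_eq_zeroE)
    with less.prems assms(1) show ?thesis by (auto intro: interval_preordering_const)
  next
    case False
    then obtain g q where gq: "p = g * q" "degree g > 0" "\<forall>t\<in>{0..M}. poly g t > 0"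
      and absorb: "\<And>q. interval_preordering M q \<Longrightarrow> interval_preordering M (g * q)"
      using positive_factor_absorbed[OF _ less.prems] by blast
    have q_pos: "\<forall>t\<in>{0..M}. poly q t > 0"
      using less.prems gq(1,3) by (fastforce simp: zero_less_mult_iff)
    then have "q \<noteq> 0" using assms(1) by fastforce
    then have "degree q < degree p" using gq(1,2) by (subst gq(1), subst degree_mult_eq) auto
    with q_pos have "interval_preordering M q" using less.hyps by blast
    then show ?thesis unfolding gq(1) by (rule absorb)
  qed
qed

section \<open>Uniform polynomial approximation\<close>

lemma real_polynomial_function_imp_poly:
  "real_polynomial_function (g :: real \<Rightarrow> real) \<Longrightarrow> \<exists>p. g = poly p"
proof (induction rule: real_polynomial_function.induct)
  case (linear f)
  then obtain c where "f = (\<lambda>x. x * c)" using real_bounded_linear by blast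
  then show ?case by (intro exI[of _ "[:0, c:]"]) auto
next
  case (const c)
  then show ?case by (intro exI[of _ "[:c:]"]) auto
next
  case (add f g)
  then obtain p q where "f = poly p" "g = poly q" by blast
  then show ?case by (intro exI[of _ "p + q"]) auto
next
  case (mult f g)
  then obtain p q where "f = poly p" "g = poly q" by blast
  then show ?case by (intro exI[of _ "p * q"]) auto
qed

lemma polynomial_uniform_approximation:
  fixes f :: "real \<Rightarrow> real"
  assumes "continuous_on {a..b} f"
  shows "\<exists>p. uniform_limit {a..b} (\<lambda>n. poly (p n)) f sequentially"
proof -
  have "\<exists>q. \<forall>t\<in>{a..b}. \<bar>f t - poly q t\<bar> < 1 / Suc n" for n
  proof -
    obtain g where "real_polynomial_function g" "\<And>t. t \<in> {a..b} \<Longrightarrow> \<bar>f t - g t\<bar> < 1 / Suc n"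
      using Stone_Weierstrass_real_polynomial_function[OF compact_Icc assms, of "1 / Suc n"] by auto
    then show ?thesis using real_polynomial_function_imp_poly by metis
  qed
  then obtain p where p: "\<And>n t. t \<in> {a..b} \<Longrightarrow> \<bar>f t - poly (p n) t\<bar> < 1 / Suc n" by metis
  have "uniform_limit {a..b} (\<lambda>n. poly (p n)) f sequentially"
  proof (rule uniform_limitI)
    fix e :: real assume "e > 0"
    then have "\<forall>\<^sub>F n in sequentially. 1 / Suc n < e"
      using order_tendstoD(2)[OF LIMSEQ_Suc[OF lim_inverse_n']] by simp
    then show "\<forall>\<^sub>F n in sequentially. \<forall>t\<in>{a..b}. dist (poly (p n) t) (f t) < e"
      by (rule eventually_mono) (auto simp: dist_real_def abs_minus_commute intro: order_less_trans p)
  qed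
  then show ?thesis by blast
qed

lemma bounded_continuous_image_Icc:
  fixes f :: "real \<Rightarrow> real"
  shows "continuous_on {a..b} f \<Longrightarrow> bounded (f ` {a..b})"
  by (intro compact_imp_bounded compact_continuous_image compact_Icc)

lemma uniform_limit_weighted_square:
  fixes f w :: "real \<Rightarrow> real"
  assumes "uniform_limit {a..b} g f sequentially"
    and "continuous_on {a..b} f" "continuous_on {a..b} w"
  shows "uniform_limit {a..b} (\<lambda>n t. w t * (g n t * g n t)) (\<lambda>t. w t * (f t * f t)) sequentially"
proof (intro uniform_limit_const uniform_lim_mult assms(1))
  show "bounded (w ` {a..b})" by (rule bounded_continuous_image_Icc[OF assms(3)])
  show "bounded ((\<lambda>t. f t * f t) ` {a..b})"
    using assms(2) by (intro bounded_continuous_image_Icc continuous_intros)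
qed (fact bounded_continuous_image_Icc[OF assms(2)])+

section \<open>Young-type inequalities\<close>

lemma Young_powr_bound:
  fixes t K \<alpha> :: real
  assumes "t \<ge> 0" "K > 0" "\<alpha> > 0"
  shows "t powr \<alpha> \<le> \<alpha> / (\<alpha> + 1) * K * t powr (\<alpha> + 1) + 1 / (\<alpha> + 1) * K powr (- \<alpha>)"
proof (cases "t = 0")
  case True
  then show ?thesis using assms by simp
next
  case False
  with assms have "t > 0" by simp
  have weights: "0 \<le> \<alpha> / (\<alpha> + 1)" "0 \<le> 1 / (\<alpha> + 1)" "\<alpha> / (\<alpha> + 1) + 1 / (\<alpha> + 1) = 1"
    using assms(3) by (simp_all add: field_simps)
  have "t powr \<alpha> = (K * t powr (\<alpha> + 1)) powr (\<alpha> / (\<alpha> + 1)) * (K powr (- \<alpha>)) powr (1 / (\<alpha> + 1))"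
    using \<open>t > 0\<close> assms(2,3)
    by (simp add: powr_mult powr_powr flip: powr_add)
  also have "\<dots> \<le> \<alpha> / (\<alpha> + 1) * (K * t powr (\<alpha> + 1)) + 1 / (\<alpha> + 1) * K powr (- \<alpha>)"
    using \<open>t > 0\<close> assms(2) by (intro Youngs_inequality_0 weights) simp_all
  finally show ?thesis by (simp add: mult.assoc)
qed

lemma power_mult_powr_square:
  fixes t \<mu> :: real
  assumes "t \<ge> 0"
  shows "t ^ k * (t powr \<mu>)^2 = t powr (2 * \<mu> + k)"
proof (cases "t = 0")
  case False
  with assms have "t > 0" by simp
  then show ?thesis
    by (simp add: power2_eq_square powr_realpow [symmetric] flip: powr_add) (simp add: algebra_simps)
qed simp

lemma Young_powr_square_bound:
  fixes t K \<mu> :: real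
  assumes "t \<ge> 0" "K > 0" "\<mu> > 0"
  shows "t * (t powr \<mu>)^2
    \<le> (2*\<mu>+1) / (2*\<mu>+2) * K * (t^2 * (t powr \<mu>)^2) + 1 / (2*\<mu>+2) * K powr (-(2*\<mu>+1))"
  using Young_powr_bound[OF assms(1,2), of "2*\<mu>+1"] assms(3)
    power_mult_powr_square[OF assms(1), of 1 \<mu>] power_mult_powr_square[OF assms(1), of 2 \<mu>]
  by (simp add: add.assoc)

lemma Young_family_optimum:
  fixes a b c \<alpha> :: real
  assumes "\<alpha> > 0" "b > 0" "c > 0"
    and bound: "\<And>K. K > 0 \<Longrightarrow> a^2 \<le> \<alpha> / (\<alpha> + 1) * K * b^2 + 1 / (\<alpha> + 1) * K powr (- \<alpha>) * c^2"
  shows "a^2 \<le> (c / b) powr (2 / (\<alpha> + 1)) * b^2"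
proof -
  \<comment> \<open>This K makes the two terms of the bound equal.\<close>
  define K where "K = (c / b) powr (2 / (\<alpha> + 1))"
  have "K > 0" unfolding K_def using assms(2,3) by simp
  have "K powr (\<alpha> + 1) = (c / b)^2"
  proof -
    have "K powr (\<alpha> + 1) = (c / b) powr (2 / (\<alpha> + 1) * (\<alpha> + 1))"
      unfolding K_def by (rule powr_powr)
    also have "2 / (\<alpha> + 1) * (\<alpha> + 1) = 2" using assms(1) by (simp add: field_simps)
    also have "(c / b) powr 2 = (c / b)^2" using assms(2,3) by (simp add: powr_numeral)
    finally show ?thesis .
  qed
  then have c2: "c^2 = K powr (\<alpha> + 1) * b^2"
    using assms(2) by (simp add: power_divide field_simps)
  have "K powr (- \<alpha>) * K powr (\<alpha> + 1) = K"
    using \<open>K > 0\<close> by (simp flip: powr_add)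
  then have "K powr (- \<alpha>) * c^2 = K * b^2"
    unfolding c2 by (simp only: mult.assoc[symmetric])
  then have "a^2 \<le> \<alpha> / (\<alpha> + 1) * (K * b^2) + 1 / (\<alpha> + 1) * (K * b^2)"
    using bound[OF \<open>K > 0\<close>] by (simp add: mult.assoc)
  also have "\<dots> = ((\<alpha> + 1) / (\<alpha> + 1)) * (K * b^2)" by (simp only: distrib_right add_divide_distrib)
  also have "\<dots> = K * b^2" using assms(1) by simp
  finally show ?thesis unfolding K_def .
qed

lemma Young_family_degenerate:
  fixes a b c \<alpha> :: real
  assumes "\<alpha> > 0" "a \<ge> 0"
    and bound: "\<And>K. K > 0 \<Longrightarrow> a^2 \<le> \<alpha> / (\<alpha> + 1) * K * b^2 + 1 / (\<alpha> + 1) * K powr (- \<alpha>) * c^2"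
    and "b = 0 \<or> c = 0"
  shows "a = 0"
proof (rule ccontr)
  assume "a \<noteq> 0"
  with assms(2) have "a > 0" by simp
  from assms(4) show False
  proof
    assume "b = 0"
    have c1: "c^2 + 1 > 0" by (rule add_nonneg_pos) simp_all
    define K where "K = ((c^2 + 1) / a^2) powr (1 / \<alpha>)"
    have "K > 0" unfolding K_def using \<open>a > 0\<close> c1 by simp
    have "K powr (- \<alpha>) = a^2 / (c^2 + 1)"
      unfolding K_def using \<open>a > 0\<close> assms(1) c1 by (simp add: powr_powr powr_minus)
    then have "a^2 \<le> 1 / (\<alpha> + 1) * (a^2 * (c^2 / (c^2 + 1)))"
      using bound[OF \<open>K > 0\<close>] \<open>b = 0\<close> by (simp add: field_simps)
    also have "\<dots> \<le> a^2 * (c^2 / (c^2 + 1))"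
      using assms(1) by (intro mult_left_le_one_le) simp_all
    also have "\<dots> < a^2 * 1"
      using \<open>a > 0\<close> c1 by (intro mult_strict_left_mono) simp_all
    finally show False by simp
  next
    assume "c = 0"
    have b1: "b^2 + 1 > 0" by (rule add_nonneg_pos) simp_all
    define K where "K = a^2 / (b^2 + 1)"
    have "K > 0" unfolding K_def using \<open>a > 0\<close> b1 by simp
    then have "a^2 \<le> \<alpha> / (\<alpha> + 1) * (a^2 * (b^2 / (b^2 + 1)))"
      using bound[OF \<open>K > 0\<close>] \<open>c = 0\<close> unfolding K_def by (simp add: field_simps)
    also have "\<dots> \<le> a^2 * (b^2 / (b^2 + 1))"
      using assms(1) by (intro mult_left_le_one_le) simp_all
    also have "\<dots> < a^2 * 1"
      using \<open>a > 0\<close> b1 by (intro mult_strict_left_mono) simp_all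
    finally show False by simp
  qed
qed

lemma powr_le_of_square_le:
  fixes a b c \<alpha> :: real
  assumes "\<alpha> > 0" "a > 0" "b > 0" "c > 0"
    and "a^2 \<le> (c / b) powr (2 / (\<alpha> + 1)) * b^2"
  shows "a powr ((\<alpha> + 1) / \<alpha>) \<le> c powr (1 / \<alpha>) * b"
proof -
  have "(\<alpha> + 1) / \<alpha> = 2 * ((\<alpha> + 1) / (2 * \<alpha>))" using assms(1) by (simp add: field_simps)
  then have "a powr ((\<alpha> + 1) / \<alpha>) = a powr (2 * ((\<alpha> + 1) / (2 * \<alpha>)))" by simp
  also have "\<dots> = (a powr 2) powr ((\<alpha> + 1) / (2 * \<alpha>))" by (rule powr_powr [symmetric])
  also have "\<dots> = (a^2) powr ((\<alpha> + 1) / (2 * \<alpha>))" using assms(2) by (simp add: powr_numeral)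
  also have "\<dots> \<le> ((c / b) powr (2 / (\<alpha> + 1)) * b^2) powr ((\<alpha> + 1) / (2 * \<alpha>))"
    using assms(1,5) by (intro powr_mono2) simp_all
  also have "\<dots> = ((c / b) powr (2 / (\<alpha> + 1))) powr ((\<alpha> + 1) / (2 * \<alpha>))
      * (b powr 2) powr ((\<alpha> + 1) / (2 * \<alpha>))"
    using assms(3,4) by (simp add: powr_mult powr_numeral)
  also have "\<dots> = (c / b) powr (1 / \<alpha>) * b powr (1 / \<alpha> + 1)"
  proof -
    have "2 / (\<alpha> + 1) * ((\<alpha> + 1) / (2 * \<alpha>)) = 1 / \<alpha>"
      "2 * ((\<alpha> + 1) / (2 * \<alpha>)) = 1 / \<alpha> + 1"
      using assms(1) by (simp_all add: divide_simps)
    then show ?thesis by (simp only: powr_powr)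
  qed
  also have "\<dots> = c powr (1 / \<alpha>) * b"
    using assms(3,4) by (simp add: powr_divide powr_add)
  finally show ?thesis .
qed

lemma powr_le_of_Young_family:
  fixes a b c \<alpha> :: real
  assumes "\<alpha> > 0" "a \<ge> 0" "b \<ge> 0" "c \<ge> 0"
    and bound: "\<And>K. K > 0 \<Longrightarrow> a^2 \<le> \<alpha> / (\<alpha> + 1) * K * b^2 + 1 / (\<alpha> + 1) * K powr (- \<alpha>) * c^2"
  shows "a powr ((\<alpha> + 1) / \<alpha>) \<le> c powr (1 / \<alpha>) * b"
proof (cases "a = 0")
  case True
  then show ?thesis using assms(3,4) by simp
next
  case False
  then have "b \<noteq> 0" "c \<noteq> 0" using Young_family_degenerate[OF assms(1,2) bound] by blast+
  with assms(2-4) False have "a > 0" "b > 0" "c > 0" by simp_all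
  with assms(1) show ?thesis
    by (intro powr_le_of_square_le Young_family_optimum bound) simp_all
qed

section \<open>Polynomial functional calculus of a positive operator\<close>

(* For self-adjoint T the last assumption says T^2 <= M T, i.e. the spectrum of T lies in [0, M]. *)
locale positive_operator =
  fixes T :: "'a::{real_inner,complete_space} \<Rightarrow> 'a" and M :: real
  assumes linear_T: "linear T"
    and self_adjoint: "T x \<bullet> y = x \<bullet> T y"
    and bound_nonneg: "0 \<le> M"
    and norm_square_le: "norm (T x) ^ 2 \<le> M * (T x \<bullet> x)"
begin

lemma inner_nonneg: "0 \<le> T x \<bullet> x"
proof (cases "M = 0")
  case True
  then show ?thesis using norm_square_le[of x] by simp
next
  case False
  have "0 \<le> M * (T x \<bullet> x)" using norm_square_le[of x] by (metis order_trans zero_le_power2)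
  with False bound_nonneg show ?thesis by (simp add: zero_le_mult_iff)
qed

lemma norm_le: "norm (T x) \<le> M * norm x"
proof -
  have "norm (T x) * norm (T x) \<le> (M * norm x) * norm (T x)"
    using norm_square_le[of x] norm_cauchy_schwarz[of "T x" x] bound_nonneg
    by (simp add: power2_eq_square mult_left_mono mult_ac order_trans)
  then show ?thesis using bound_nonneg by (cases "T x = 0") auto
qed

lemma bounded_linear_T: "bounded_linear T"
  using linear_T norm_le by (intro bounded_linear_intro[where K = M]) (simp_all add: linear_add linear_scale mult.commute)

lemma poly_op_self_adjoint: "poly_op p T x \<bullet> y = x \<bullet> poly_op p T y"
proof (induction p arbitrary: x y)
  case (pCons a p)
  have "T (poly_op p T x) \<bullet> y = x \<bullet> poly_op p T (T y)"
    by (simp add: self_adjoint pCons.IH)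
  then show ?case
    by (simp add: poly_op_pCons linear_T poly_op_commute inner_add_left inner_add_right)
qed simp

lemma poly_op_sandwich:
  "poly_op (p * (q * p)) T x \<bullet> x = poly_op q T (poly_op p T x) \<bullet> poly_op p T x"
  by (simp only: poly_op_mult[OF linear_T]) (rule poly_op_self_adjoint)

lemma poly_op_inner_nonneg_if_preordering:
  "interval_preordering M p \<Longrightarrow> 0 \<le> poly_op p T x \<bullet> x"
proof (induction rule: interval_preordering.induct)
  case (square_mult g s)
  define y where "y = poly_op s T x"
  have "s * s * g = s * (g * s)" by (simp only: mult_ac)
  then have "poly_op (s * s * g) T x \<bullet> x = poly_op g T y \<bullet> y"
    unfolding y_def by (simp only: poly_op_sandwich)
  moreover have "0 \<le> poly_op g T y \<bullet> y"
    using square_mult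
  proof (elim insertE emptyE)
    have "T y \<bullet> y \<le> norm (T y) * norm y" by (rule norm_cauchy_schwarz)
    also have "\<dots> \<le> M * norm y * norm y" by (rule mult_right_mono[OF norm_le]) simp
    finally have "T y \<bullet> y \<le> M * (y \<bullet> y)"
      by (simp add: mult.assoc power2_eq_square flip: power2_norm_eq_inner)
    then show "g = [:M, -1:] \<Longrightarrow> 0 \<le> poly_op g T y \<bullet> y"
      by (simp add: poly_op_pCons linear_T linear_0 linear_neg inner_diff_left)
    have "poly_op [:0, M, -1:] T y = M *\<^sub>R T y - T (T y)"
      by (simp add: poly_op_pCons linear_T linear_0 linear_neg linear_diff linear_scale)
    moreover have "T (T y) \<bullet> y = T y \<bullet> T y" by (rule self_adjoint)
    ultimately show "g = [:0, M, -1:] \<Longrightarrow> 0 \<le> poly_op g T y \<bullet> y"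
      using norm_square_le[of y] by (simp add: inner_diff_left power2_norm_eq_inner)
  qed (simp_all add: linear_T inner_nonneg)
  ultimately show ?case by simp
next
  case (add p q)
  then show ?case by (simp add: poly_op_add[OF linear_T] inner_add_left)
qed

lemma poly_op_inner_ge:
  assumes "\<forall>t\<in>{0..M}. poly p t \<ge> - d"
  shows "poly_op p T x \<bullet> x \<ge> - d * (x \<bullet> x)"
proof (rule ccontr)
  assume neg: "\<not> poly_op p T x \<bullet> x \<ge> - d * (x \<bullet> x)"
  define e where "e = (- d * (x \<bullet> x) - poly_op p T x \<bullet> x) / (x \<bullet> x + 1)"
  have den: "x \<bullet> x + 1 > 0" by (simp add: add_nonneg_pos)
  with neg have "e > 0" unfolding e_def by simp
  then have "e * (x \<bullet> x) < e * (x \<bullet> x + 1)" by simp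
  also have "\<dots> = - d * (x \<bullet> x) - poly_op p T x \<bullet> x" unfolding e_def using den by simp
  finally have e: "e * (x \<bullet> x) < - d * (x \<bullet> x) - poly_op p T x \<bullet> x" .
  have "\<forall>t\<in>{0..M}. poly (p + [:d + e:]) t > 0"
  proof
    fix t assume "t \<in> {0..M}"
    with assms have "- d \<le> poly p t" by blast
    with \<open>e > 0\<close> show "poly (p + [:d + e:]) t > 0" by simp
  qed
  then have "0 \<le> poly_op (p + [:d + e:]) T x \<bullet> x"
    by (intro poly_op_inner_nonneg_if_preordering interval_preordering_if_positive bound_nonneg)
  moreover have "poly_op (p + [:d + e:]) T x \<bullet> x = poly_op p T x \<bullet> x + (d + e) * (x \<bullet> x)"
    by (simp add: poly_op_add[OF linear_T] linear_T inner_add_left)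
  ultimately show False using e by (simp add: distrib_right)
qed

lemma norm_poly_op_le:
  assumes "\<forall>t\<in>{0..M}. \<bar>poly q t\<bar> \<le> e"
  shows "norm (poly_op q T x) \<le> e * norm x"
proof -
  have "\<bar>poly q 0\<bar> \<le> e" using assms bound_nonneg by simp
  then have "e \<ge> 0" by linarith
  have "\<forall>t\<in>{0..M}. poly ([:e^2:] - q * q) t \<ge> - 0"
  proof
    fix t assume "t \<in> {0..M}"
    then have "\<bar>poly q t\<bar> ^ 2 \<le> e ^ 2" using assms by (intro power_mono) auto
    then show "poly ([:e^2:] - q * q) t \<ge> - 0" by (simp add: power2_eq_square)
  qed
  from poly_op_inner_ge[OF this, of x]
  have "poly_op q T (poly_op q T x) \<bullet> x \<le> e^2 * (x \<bullet> x)"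
    by (simp add: poly_op_diff[OF linear_T] poly_op_mult[OF linear_T] linear_T inner_diff_left)
  then have "norm (poly_op q T x) ^ 2 \<le> (e * norm x) ^ 2"
    by (simp add: poly_op_self_adjoint power_mult_distrib power2_norm_eq_inner)
  then show ?thesis by (rule power2_le_imp_le) (use \<open>e \<ge> 0\<close> in simp)
qed

lemma norm_poly_op_less:
  assumes "e > 0" and "\<forall>t\<in>{0..M}. \<bar>poly q t\<bar> < e / (norm x + 1)"
  shows "norm (poly_op q T x) < e"
proof -
  have pos: "norm x + 1 > 0" by (simp add: add_nonneg_pos)
  have "norm (poly_op q T x) \<le> e / (norm x + 1) * norm x"
    using assms(2) by (intro norm_poly_op_le) (auto simp: less_imp_le)
  also have "\<dots> < e" using assms(1) pos by (simp add: pos_divide_less_eq)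
  finally show ?thesis .
qed

lemma poly_op_tendsto_zero:
  assumes "uniform_limit {0..M} (\<lambda>n. poly (p n)) (\<lambda>_. 0) sequentially"
  shows "(\<lambda>n. poly_op (p n) T x) \<longlonglongrightarrow> 0"
proof (rule tendstoI)
  fix e :: real assume "e > 0"
  then have "e / (norm x + 1) > 0" by (simp add: add_nonneg_pos)
  from uniform_limitD[OF assms this]
  show "\<forall>\<^sub>F n in sequentially. dist (poly_op (p n) T x) 0 < e"
    by (rule eventually_mono) (use \<open>e > 0\<close> in \<open>simp add: norm_poly_op_less\<close>)
qed

lemma poly_op_Cauchy:
  assumes "uniform_limit {0..M} (\<lambda>n. poly (p n)) f sequentially"
  shows "Cauchy (\<lambda>n. poly_op (p n) T x)"
proof (rule metric_CauchyI)
  fix e :: real assume "e > 0"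
  then have "e / (norm x + 1) > 0" by (simp add: add_nonneg_pos)
  moreover have "uniformly_Cauchy_on {0..M} (\<lambda>n. poly (p n))"
    using assms by (intro uniformly_convergent_Cauchy uniformly_convergentI)
  ultimately obtain N where
    N: "\<forall>t\<in>{0..M}. \<forall>m\<ge>N. \<forall>n\<ge>N. dist (poly (p m) t) (poly (p n) t) < e / (norm x + 1)"
    unfolding uniformly_Cauchy_on_def by blast
  have "norm (poly_op (p m - p n) T x) < e" if "m \<ge> N" "n \<ge> N" for m n
    using N that \<open>e > 0\<close> by (intro norm_poly_op_less) (auto simp: dist_real_def)
  then show "\<exists>N. \<forall>m\<ge>N. \<forall>n\<ge>N. dist (poly_op (p m) T x) (poly_op (p n) T x) < e"
    by (auto simp: dist_norm poly_op_diff[OF linear_T])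
qed

lemma frac_power_LIMSEQ:
  assumes "M = onorm T"
    and approx: "uniform_limit {0..M} (\<lambda>n. poly (p n)) (\<lambda>t. t powr \<mu>) sequentially"
  shows "(\<lambda>n. poly_op (p n) T x) \<longlonglongrightarrow> frac_power T \<mu> x"
proof -
  obtain v where v: "(\<lambda>n. poly_op (p n) T x) \<longlonglongrightarrow> v"
    using poly_op_Cauchy[OF approx] Cauchy_convergent_iff convergent_def by blast
  \<comment> \<open>Any other approximating sequence differs by a sequence tending uniformly to 0.\<close>
  have conv: "(\<lambda>n. poly_op (q n) T x) \<longlonglongrightarrow> v"
    if "uniform_limit {0..M} (\<lambda>n. poly (q n)) (\<lambda>t. t powr \<mu>) sequentially" for q
  proof -
    have "(\<lambda>n. poly (p n - q n)) = (\<lambda>n t. poly (p n) t - poly (q n) t)" by (simp add: fun_eq_iff)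
    then have "uniform_limit {0..M} (\<lambda>n. poly (p n - q n)) (\<lambda>_. 0) sequentially"
      using uniform_limit_minus[OF approx that] by simp
    from poly_op_tendsto_zero[OF this]
    have "(\<lambda>n. poly_op (p n) T x - poly_op (q n) T x) \<longlonglongrightarrow> 0"
      by (simp add: poly_op_diff[OF linear_T])
    from tendsto_diff[OF v this] show ?thesis by simp
  qed
  have "frac_power T \<mu> x = v"
    unfolding frac_power_def assms(1)[symmetric]
  proof (rule the_equality)
    fix w
    assume "\<forall>q. uniform_limit {0..M} (\<lambda>n. poly (q n)) (\<lambda>t. t powr \<mu>) sequentially
      \<longrightarrow> (\<lambda>n. poly_op (q n) T x) \<longlonglongrightarrow> w"
    then show "w = v" using approx v LIMSEQ_unique by blast
  qed (use conv in blast)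
  with v show ?thesis by simp
qed

lemma poly_op_inner_limit_nonneg:
  assumes approx: "uniform_limit {0..M} (\<lambda>n. poly (h n)) g sequentially"
    and nonneg: "\<forall>t\<in>{0..M}. g t \<ge> 0"
    and lim: "(\<lambda>n. poly_op (h n) T x \<bullet> x) \<longlonglongrightarrow> L"
  shows "L \<ge> 0"
proof (rule field_le_epsilon)
  fix e :: real assume "e > 0"
  define d where "d = e / (x \<bullet> x + 1)"
  have pos: "x \<bullet> x + 1 > 0" by (simp add: add_nonneg_pos)
  with \<open>e > 0\<close> have "d > 0" unfolding d_def by simp
  have "d * (x \<bullet> x) \<le> e"
    using \<open>e > 0\<close> pos unfolding d_def by (simp add: pos_divide_le_eq)
  moreover have "- d * (x \<bullet> x) \<le> L"
  proof (rule LIMSEQ_le_const[OF lim])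
    obtain N where "\<forall>n\<ge>N. \<forall>t\<in>{0..M}. dist (poly (h n) t) (g t) < d"
      using uniform_limitD[OF approx \<open>d > 0\<close>] unfolding eventually_sequentially by blast
    then have "\<forall>n\<ge>N. \<forall>t\<in>{0..M}. poly (h n) t \<ge> - d"
      using nonneg by (fastforce simp: dist_real_def)
    then show "\<exists>N. \<forall>n\<ge>N. - d * (x \<bullet> x) \<le> poly_op (h n) T x \<bullet> x"
      using poly_op_inner_ge by blast
  qed
  ultimately show "0 \<le> L + e" by linarith
qed

lemma poly_op_inner_Young_form:
  fixes p :: "real poly" and w :: 'a
  defines "P \<equiv> poly_op p T w"
  shows "poly_op (smult a (p * ([:0, 1:] * [:0, 1:] * p)) + [:c:] - p * ([:0, 1:] * p)) T w \<bullet> w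
    = a * (T P \<bullet> T P) + c * (w \<bullet> w) - T P \<bullet> P"
proof -
  have "T (T P) \<bullet> P = T P \<bullet> T P" by (rule self_adjoint)
  then show ?thesis
    unfolding P_def poly_op_diff[OF linear_T] poly_op_add[OF linear_T] poly_op_smult[OF linear_T]
      poly_op_const[OF linear_T] inner_diff_left inner_add_left inner_scaleR_left poly_op_sandwich
    by (simp only: poly_op_mult[OF linear_T] poly_op_X[OF linear_T])
qed

lemma frac_power_Young_bound:
  fixes w :: 'a
  assumes "M = onorm T" and "\<mu> > 0" and "K > 0"
  defines "u \<equiv> frac_power T \<mu> w"
  shows "T u \<bullet> u \<le> (2*\<mu>+1) / (2*\<mu>+2) * K * (T u \<bullet> T u)
                    + 1 / (2*\<mu>+2) * K powr (-(2*\<mu>+1)) * (w \<bullet> w)"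
proof -
  define f where "f t = t powr \<mu>" for t :: real
  define a where "a = (2*\<mu>+1) / (2*\<mu>+2) * K"
  define c where "c = 1 / (2*\<mu>+2) * K powr (-(2*\<mu>+1))"
  have f_cont: "continuous_on {0..M} f"
    unfolding f_def using \<open>\<mu> > 0\<close> by (intro continuous_on_powr') (auto intro: continuous_intros)
  then obtain p where approx: "uniform_limit {0..M} (\<lambda>n. poly (p n)) f sequentially"
    using polynomial_uniform_approximation by blast
  define P where "P n = poly_op (p n) T w" for n
  have P: "P \<longlonglongrightarrow> u"
    unfolding P_def u_def using frac_power_LIMSEQ[OF assms(1) approx[unfolded f_def]] .
  have TP: "(\<lambda>n. T (P n)) \<longlonglongrightarrow> T u" by (rule bounded_linear.tendsto[OF bounded_linear_T P])
  \<comment> \<open>The polynomials h n approximate g t = (a t^2 - t) f(t)^2 + c, which is nonnegative by Young.\<close>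
  define h where "h n = smult a (p n * ([:0, 1:] * [:0, 1:] * p n)) + [:c:] - p n * ([:0, 1:] * p n)" for n
  have "uniform_limit {0..M} (\<lambda>n t. (a * t^2 - t) * (poly (p n) t * poly (p n) t) + c)
          (\<lambda>t. (a * t^2 - t) * (f t * f t) + c) sequentially"
    using f_cont
    by (intro uniform_limit_add uniform_limit_const uniform_limit_weighted_square approx continuous_intros)
  moreover have "(\<lambda>n t. (a * t^2 - t) * (poly (p n) t * poly (p n) t) + c) = (\<lambda>n. poly (h n))"
    unfolding h_def by (simp add: fun_eq_iff algebra_simps power2_eq_square)
  ultimately have h_approx: "uniform_limit {0..M} (\<lambda>n. poly (h n)) (\<lambda>t. (a * t^2 - t) * (f t * f t) + c) sequentially"
    by simp
  have g_nonneg: "\<forall>t\<in>{0..M}. (a * t^2 - t) * (f t * f t) + c \<ge> 0"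
  proof
    fix t :: real assume "t \<in> {0..M}"
    then have "t * (f t)^2 \<le> a * (t^2 * (f t)^2) + c"
      using Young_powr_square_bound[of t K \<mu>] assms(2,3) unfolding a_def c_def f_def by simp
    then show "(a * t^2 - t) * (f t * f t) + c \<ge> 0" by (simp add: power2_eq_square algebra_simps)
  qed
  have "poly_op (h n) T w \<bullet> w = a * (T (P n) \<bullet> T (P n)) + c * (w \<bullet> w) - T (P n) \<bullet> P n" for n
    unfolding h_def P_def by (rule poly_op_inner_Young_form)
  moreover have "(\<lambda>n. a * (T (P n) \<bullet> T (P n)) + c * (w \<bullet> w) - T (P n) \<bullet> P n)
      \<longlonglongrightarrow> a * (T u \<bullet> T u) + c * (w \<bullet> w) - T u \<bullet> u"
    by (intro tendsto_intros P TP)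
  ultimately have "(\<lambda>n. poly_op (h n) T w \<bullet> w) \<longlonglongrightarrow> a * (T u \<bullet> T u) + c * (w \<bullet> w) - T u \<bullet> u"
    by simp
  from poly_op_inner_limit_nonneg[OF h_approx g_nonneg this] show ?thesis unfolding a_def c_def by simp
qed

end

lemma positive_operator_adjoint_comp:
  fixes A :: "'a::{real_inner,complete_space} \<Rightarrow> 'b::real_inner"
  assumes A: "bounded_linear A"
  defines "T \<equiv> adjoint A \<circ> A"
  shows "positive_operator T (onorm T)"
proof (rule positive_operator.intro)
  have bl: "bounded_linear T"
    unfolding T_def comp_def by (rule bounded_linear_compose[OF bounded_linear_adjoint_hilbert[OF A] A])
  then show "linear T" by (rule bounded_linear.linear)
  show "0 \<le> onorm T" by (rule onorm_pos_le[OF bl])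
  have TA: "T x \<bullet> y = A x \<bullet> A y" for x y
    unfolding T_def using adjoint_works_hilbert[OF A, of y "A x"] by (simp add: inner_commute)
  then show "T x \<bullet> y = x \<bullet> T y" for x y by (metis inner_commute)
  have A_sq: "norm (A v) ^ 2 \<le> onorm T * norm v ^ 2" for v
  proof -
    have "norm (A v) ^ 2 = T v \<bullet> v" by (simp add: TA power2_norm_eq_inner)
    also have "\<dots> \<le> norm (T v) * norm v" by (rule norm_cauchy_schwarz)
    also have "\<dots> \<le> onorm T * norm v * norm v" by (rule mult_right_mono[OF onorm[OF bl]]) simp
    finally show ?thesis by (simp add: power2_eq_square mult.assoc)
  qed
  show "norm (T x) ^ 2 \<le> onorm T * (T x \<bullet> x)" for x
  proof (cases "T x = 0")
    case False
    have "norm (T x) ^ 2 = A x \<bullet> A (T x)" by (simp add: TA power2_norm_eq_inner inner_commute)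
    also have "\<dots> \<le> norm (A x) * norm (A (T x))" by (rule norm_cauchy_schwarz)
    finally have "(norm (T x) ^ 2) ^ 2 \<le> norm (A x) ^ 2 * norm (A (T x)) ^ 2"
      by (metis power_mono power_mult_distrib zero_le_power2)
    also have "\<dots> \<le> norm (A x) ^ 2 * (onorm T * norm (T x) ^ 2)"
      by (intro mult_left_mono A_sq) simp
    finally have "norm (T x) ^ 2 \<le> norm (A x) ^ 2 * onorm T"
      using False by (simp add: power2_eq_square mult_ac)
    then show ?thesis by (simp add: TA power2_norm_eq_inner mult.commute)
  qed (simp add: onorm_pos_le[OF bl] TA)
qed

theorem mainTheorem1:
  fixes A :: "'x::{real_inner, complete_space} \<Rightarrow> 'y::{real_inner, complete_space}"
    and xd x w :: 'x and y :: 'y and \<mu> :: real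
  assumes "bounded_linear A"
    and "y = A xd"
    and "\<mu> > 0"
    and "x - xd = frac_power (adjoint A \<circ> A) \<mu> w"
  shows "norm (A x - y) powr ((2*\<mu>+2)/(2*\<mu>+1))
           \<le> norm w powr (1/(2*\<mu>+1)) * norm (adjoint A (A x - y))"
proof -
  define T where "T = adjoint A \<circ> A"
  define u where "u = frac_power T \<mu> w"
  interpret positive_operator T "onorm T"
    unfolding T_def by (rule positive_operator_adjoint_comp[OF assms(1)])
  have residual: "A x - y = A u"
    using assms(2,4) linear_diff[OF bounded_linear.linear[OF assms(1)], of x xd]
    unfolding u_def T_def by simp
  have "norm (A u) ^ 2 = T u \<bullet> u"
    unfolding T_def using adjoint_works_hilbert[OF assms(1), of u "A u"]
    by (simp add: power2_norm_eq_inner inner_commute)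
  then have "norm (A u) ^ 2 \<le> (2*\<mu>+1) / (2*\<mu>+1+1) * K * norm (T u) ^ 2
      + 1 / (2*\<mu>+1+1) * K powr (- (2*\<mu>+1)) * norm w ^ 2" if "K > 0" for K
    using frac_power_Young_bound[OF refl assms(3) that, of w] unfolding u_def
    by (simp add: power2_norm_eq_inner add.assoc)
  from powr_le_of_Young_family[of "2*\<mu>+1", OF _ _ _ _ this] assms(3)
  have "norm (A u) powr ((2*\<mu>+1+1) / (2*\<mu>+1)) \<le> norm w powr (1 / (2*\<mu>+1)) * norm (T u)"
    by simp
  then show ?thesis unfolding residual T_def by (simp add: add.assoc)
qed

end
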